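(* Let $q$ be such that the Jost solutions exist and let $\Phi^\pm=[\phi_1^\pm,\phi_2^\pm]=(\phi^\pm_{ij})$, with columns extended analytically as usual ($\phi_1^-,\phi_2^+$ to $\mathbb{D}_+$, $\phi_1^+,\phi_2^-$ to $\mathbb{D}_-$). Define the squared eigenfunctions $$\Omega_{+,1}=\begin{pmatrix}(\phi^-_{11})^2\\(\phi^-_{21})^2\end{pmatrix},\ \Omega_{-,2}=\begin{pmatrix}(\phi^-_{12})^2\\(\phi^-_{22})^2\end{pmatrix},\ \Omega_{-,1}=\begin{pmatrix}(\phi^+_{21})^2\\-(\phi^+_{11})^2\end{pmatrix},\ \Omega_{+,2}=\begin{pmatrix}(\phi^+_{22})^2\\-(\phi^+_{12})^2\end{pmatrix}.$$ Then, with $\hat q=q_x$, $\hat r=q_x^*$, $$\mathcal{L}(\sigma_3\partial_x\Omega_{+,1})=-\lambda^2\sigma_3\partial_x\Omega_{+,1},\quad \mathcal{L}(\sigma_3\partial_x\Omega_{-,2})=-\lambda^2\sigma_3\partial_x\Omega_{-,2},$$ $$\widetilde{\mathcal{L}}(\sigma_3\partial_x\Omega_{-,1})=-\lambda^2\sigma_3\partial_x\Omega_{-,1},\quad \widetilde{\mathcal{L}}(\sigma_3\partial_x\Omega_{+,2})=-\lambda^2\sigma_3\partial_x\Omega_{+,2},$$ for $\lambda$ in the respective domains of analyticity (or on $\Sigma$).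
   Context: $\sigma_3=\mathrm{diag}(1,-1)$. $q(x,t)$ complex-valued, rapidly decaying with its derivatives as $|x|\to\infty$; $Q=\begin{pmatrix}0&q\\ q^*&0\end{pmatrix}$. $\Phi^\pm(\lambda;x,t)$ are the solutions of $\Phi_x=(-\mathrm{i}\lambda^2\sigma_3+\lambda Q_x)\Phi$ with $\Phi^\pm e^{\mathrm{i}\lambda^2x\sigma_3}\to\mathbb{I}$ as $x\to\pm\infty$. $\Sigma=\mathbb{R}\cup\mathrm{i}\mathbb{R}$, $\mathbb{D}_+=\{\arg\lambda\in(0,\pi/2)\cup(\pi,3\pi/2)\}$, $\mathbb{D}_-=\{\arg\lambda\in(\pi/2,\pi)\cup(3\pi/2,2\pi)\}$. With $\partial=\partial_x$, $\partial_-^{-1}f=\int_{-\infty}^xf(y)\mathrm{d}y$, $\partial_+^{-1}f=\int_x^{+\infty}f(y)\mathrm{d}y$, the recursion operator and its adjoint act on vectors $(w_1,w_2)^\top$ by $$\mathcal{L}=-\frac12\begin{pmatrix}\mathrm{i}\partial+\hat q_x\partial_-^{-1}\hat r+\hat q\hat r&\hat q_x\partial_-^{-1}\hat q+\hat q^2\\ \hat r_x\partial_-^{-1}\hat r+\hat r^2&-\mathrm{i}\partial+\hat r_x\partial_-^{-1}\hat q+\hat q\hat r\end{pmatrix},\quad \widetilde{\mathcal{L}}=-\frac12\begin{pmatrix}-\mathrm{i}\partial-\hat r_x\partial_+^{-1}\hat q+\hat q\hat r&\hat r_x\partial_+^{-1}\hat r-\hat r^2\\ \hat q_x\partial_+^{-1}\hat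 q-\hat q^2&\mathrm{i}\partial-\hat q_x\partial_+^{-1}\hat r+\hat q\hat r\end{pmatrix},$$ where e.g. $\hat q_x\partial_-^{-1}\hat r$ means $w\mapsto \hat q_x\int_{-\infty}^x\hat r(y)w(y)\mathrm{d}y$ and $\hat q\hat r$ is multiplication. *)

theory Defs
  imports "HOL-Analysis.Analysis"
begin

definition dv :: "(real \<Rightarrow> complex) \<Rightarrow> real \<Rightarrow> complex" where
  "dv f = (\<lambda>x. vector_derivative f (at x))"

text \<open>The potential q(x) at a fixed time t (t is a parameter only).
  Smooth, and rapidly decaying together with all its derivatives.\<close>
definition rapidly_decaying :: "(real \<Rightarrow> complex) \<Rightarrow> bool" where
  "rapidly_decaying (q :: real \<Rightarrow> complex) \<longleftrightarrow>
     (\<forall>k (x::real). ((dv ^^ k) q) differentiable (at x)) \<and>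
     (\<forall>k n. \<exists>C. \<forall>x::real. (1 + \<bar>x\<bar>) ^ n * norm ((dv ^^ k) q x) \<le> C)"

text \<open>Domains: D+ = {arg in (0,pi/2) or (pi,3pi/2)}, D- = {arg in (pi/2,pi) or (3pi/2,2pi)},
  Sigma = R union iR. Arg takes values in (-pi,pi].\<close>
definition D_plus :: "complex set" where
  "D_plus = {l. l \<noteq> 0 \<and> (Arg l \<in> {0<..<pi/2} \<or> Arg l \<in> {-pi<..<-pi/2})}"

definition D_minus :: "complex set" where
  "D_minus = {l. l \<noteq> 0 \<and> (Arg l \<in> {pi/2<..<pi} \<or> Arg l \<in> {-pi/2<..<0})}"

definition Sigma_contour :: "complex set" where
  "Sigma_contour = {l. Im l = 0 \<or> Re l = 0}"

text \<open>(v1,v2) is a column solution of  Phi_x = (-i l^2 sigma3 + l Q_x) Phi.\<close>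
definition lax_sol :: "(real \<Rightarrow> complex) \<Rightarrow> complex \<Rightarrow> (real \<Rightarrow> complex) \<Rightarrow> (real \<Rightarrow> complex) \<Rightarrow> bool" where
  "lax_sol q l v1 v2 \<longleftrightarrow>
     (\<forall>x. (v1 has_vector_derivative (- \<i> * l^2 * v1 x + l * dv q x * v2 x)) (at x) \<and>
          (v2 has_vector_derivative (l * cnj (dv q x) * v1 x + \<i> * l^2 * v2 x)) (at x))"

text \<open>Jost columns, characterised by the ODE and the normalisation
  Phi^{+-} e^{i l^2 x sigma3} -> I as x -> +-infinity.\<close>
definition jost_minus_1 where
  "jost_minus_1 q l v1 v2 \<longleftrightarrow> lax_sol q l v1 v2 \<and>
     ((\<lambda>x. v1 x * exp (\<i> * l^2 * of_real x)) \<longlongrightarrow> 1) at_bot \<and>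
     ((\<lambda>x. v2 x * exp (\<i> * l^2 * of_real x)) \<longlongrightarrow> 0) at_bot"

definition jost_minus_2 where
  "jost_minus_2 q l v1 v2 \<longleftrightarrow> lax_sol q l v1 v2 \<and>
     ((\<lambda>x. v1 x * exp (- \<i> * l^2 * of_real x)) \<longlongrightarrow> 0) at_bot \<and>
     ((\<lambda>x. v2 x * exp (- \<i> * l^2 * of_real x)) \<longlongrightarrow> 1) at_bot"

definition jost_plus_1 where
  "jost_plus_1 q l v1 v2 \<longleftrightarrow> lax_sol q l v1 v2 \<and>
     ((\<lambda>x. v1 x * exp (\<i> * l^2 * of_real x)) \<longlongrightarrow> 1) at_top \<and>
     ((\<lambda>x. v2 x * exp (\<i> * l^2 * of_real x)) \<longlongrightarrow> 0) at_top"

definition jost_plus_2 where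
  "jost_plus_2 q l v1 v2 \<longleftrightarrow> lax_sol q l v1 v2 \<and>
     ((\<lambda>x. v1 x * exp (- \<i> * l^2 * of_real x)) \<longlongrightarrow> 0) at_top \<and>
     ((\<lambda>x. v2 x * exp (- \<i> * l^2 * of_real x)) \<longlongrightarrow> 1) at_top"

text \<open>Recursion operator L applied to (w1,w2), with coefficients qh, rh
  (partial_-^{-1} f = integral over (-inf,x]).\<close>
definition L_op :: "(real \<Rightarrow> complex) \<Rightarrow> (real \<Rightarrow> complex) \<Rightarrow> (real \<Rightarrow> complex) \<Rightarrow> (real \<Rightarrow> complex)
                     \<Rightarrow> real \<Rightarrow> complex \<times> complex" where
  "L_op qh rh w1 w2 x =
     (let I1 = integral {..x} (\<lambda>y. rh y * w1 y);
          I2 = integral {..x} (\<lambda>y. qh y * w2 y)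
      in (- (1/2) * (\<i> * dv w1 x + dv qh x * I1 + qh x * rh x * w1 x
                     + dv qh x * I2 + (qh x)^2 * w2 x),
          - (1/2) * (dv rh x * I1 + (rh x)^2 * w1 x
                     - \<i> * dv w2 x + dv rh x * I2 + qh x * rh x * w2 x)))"

definition L_defined :: "(real \<Rightarrow> complex) \<Rightarrow> (real \<Rightarrow> complex) \<Rightarrow> (real \<Rightarrow> complex) \<Rightarrow> (real \<Rightarrow> complex) \<Rightarrow> bool" where
  "L_defined qh rh w1 w2 \<longleftrightarrow> (\<forall>x. (\<lambda>y. rh y * w1 y) integrable_on {..x} \<and> (\<lambda>y. qh y * w2 y) integrable_on {..x})"

text \<open>Adjoint operator tilde-L (partial_+^{-1} f = integral over [x,+inf)).\<close>
definition Lt_op :: "(real \<Rightarrow> complex) \<Rightarrow> (real \<Rightarrow> complex) \<Rightarrow> (real \<Rightarrow> complex) \<Rightarrow> (real \<Rightarrow> complex)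
                     \<Rightarrow> real \<Rightarrow> complex \<times> complex" where
  "Lt_op qh rh w1 w2 x =
     (let I1 = integral {x..} (\<lambda>y. qh y * w1 y);
          I2 = integral {x..} (\<lambda>y. rh y * w2 y)
      in (- (1/2) * (- \<i> * dv w1 x - dv rh x * I1 + qh x * rh x * w1 x
                     + dv rh x * I2 - (rh x)^2 * w2 x),
          - (1/2) * (dv qh x * I1 - (qh x)^2 * w1 x
                     + \<i> * dv w2 x - dv qh x * I2 + qh x * rh x * w2 x)))"

definition Lt_defined :: "(real \<Rightarrow> complex) \<Rightarrow> (real \<Rightarrow> complex) \<Rightarrow> (real \<Rightarrow> complex) \<Rightarrow> (real \<Rightarrow> complex) \<Rightarrow> bool" where
  "Lt_defined qh rh w1 w2 \<longleftrightarrow> (\<forall>x. (\<lambda>y. qh y * w1 y) integrable_on {x..} \<and> (\<lambda>y. rh y * w2 y) integrable_on {x..})"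

end

theory Submission
  imports Defs "HOL-Probability.Sinc_Integral"
begin

(* Let (u, v) be a column of a Jost solution, so u' = -i l^2 u + l qh v and v' = l rh u + i l^2 v.
   The two nonlocal terms of L act on the squared eigenfunction (w1, w2) = ((u^2)', -(v^2)') only
   through the integral of rh w1 + qh w2, and by the spectral problem this integrand is the total
   derivative of -2 i l u v.  At the end where the column is normalised, u and v stay bounded and
   u v tends to 0, because |exp (+-i l^2 x)| >= 1 there precisely for l in the stated domain.  Hence
   the integral equals -2 i l u v, and the eigenvalue equation reduces to a polynomial identity in
   u, v, qh, rh and their derivatives.  For the adjoint operator the integrals run to +infinity,
   and qh w1 - rh w2 is the derivative of 2 i l u v. *)

lemma dv_eq_if_has_vector_derivative:
  "(f has_vector_derivative f') (at x) \<Longrightarrow> dv f x = f'"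
  unfolding dv_def by (rule vector_derivative_at)

lemma dv_square:
  fixes f :: "real \<Rightarrow> complex"
  assumes "\<And>x. (f has_vector_derivative f' x) (at x)"
  shows "dv (\<lambda>x. (f x)\<^sup>2) = (\<lambda>x. 2 * f x * f' x)"
proof
  fix x
  have "((\<lambda>x. f x * f x) has_vector_derivative (f x * f' x + f' x * f x)) (at x)"
    using has_vector_derivative_mult[OF assms assms] .
  then show "dv (\<lambda>x. (f x)\<^sup>2) x = 2 * f x * f' x"
    by (intro dv_eq_if_has_vector_derivative) (simp add: power2_eq_square algebra_simps)
qed

lemma bounded_const_image: "bounded ((\<lambda>_. c) ` S)"
  by (rule bounded_subset[of "{c}"]) auto

lemma bounded_mult_comp:
  fixes f g :: "'a \<Rightarrow> 'b::real_normed_algebra"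
  assumes "bounded (f ` S)" and "bounded (g ` S)"
  shows "bounded ((\<lambda>x. f x * g x) ` S)"
proof -
  obtain B C where B: "\<And>x. x \<in> S \<Longrightarrow> norm (f x) \<le> B"
    and C: "\<And>x. x \<in> S \<Longrightarrow> norm (g x) \<le> C"
    using assms unfolding bounded_iff by auto
  have "norm (f x * g x) \<le> B * C" if "x \<in> S" for x
  proof -
    have "0 \<le> B"
      using B[OF that] norm_ge_zero order_trans by blast
    then show ?thesis
      using norm_mult_ineq[of "f x" "g x"] mult_mono[OF B[OF that] C[OF that]] by force
  qed
  then show ?thesis
    unfolding bounded_iff by blast
qed

lemma bounded_image_atMost_if_Bfun_at_bot:
  fixes u :: "real \<Rightarrow> 'a::real_normed_vector"
  assumes "continuous_on UNIV u" and "Bfun u at_bot"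
  shows "bounded (u ` {..x})"
proof -
  obtain K a where K: "\<And>y. y \<le> a \<Longrightarrow> norm (u y) \<le> K"
    using assms(2) unfolding Bfun_def eventually_at_bot_linorder by blast
  have "bounded (u ` {..a})"
    using K unfolding bounded_iff by blast
  moreover have "bounded (u ` {a..x})"
    by (intro compact_imp_bounded compact_continuous_image continuous_on_subset[OF assms(1)]) auto
  moreover have "u ` {..x} \<subseteq> u ` ({..a} \<union> {a..x})"
    by (rule image_mono) auto
  ultimately show ?thesis
    by (metis bounded_Un bounded_subset image_Un)
qed

lemma bounded_image_atLeast_if_Bfun_at_top:
  fixes u :: "real \<Rightarrow> 'a::real_normed_vector"
  assumes "continuous_on UNIV u" and "Bfun u at_top"
  shows "bounded (u ` {x..})"
proof -
  obtain K a where K: "\<And>y. y \<ge> a \<Longrightarrow> norm (u y) \<le> K"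
    using assms(2) unfolding Bfun_def eventually_at_top_linorder by blast
  have "bounded (u ` {a..})"
    using K unfolding bounded_iff by blast
  moreover have "bounded (u ` {x..a})"
    by (intro compact_imp_bounded compact_continuous_image continuous_on_subset[OF assms(1)]) auto
  moreover have "u ` {x..} \<subseteq> u ` ({x..a} \<union> {a..})"
    by (rule image_mono) auto
  ultimately show ?thesis
    by (metis bounded_Un bounded_subset image_Un)
qed

lemma Bfun_if_tendsto_mult_large:
  fixes u E :: "'a \<Rightarrow> 'b::real_normed_div_algebra"
  assumes lim: "((\<lambda>x. u x * E x) \<longlongrightarrow> a) F"
    and E: "eventually (\<lambda>x. 1 \<le> norm (E x)) F"
  shows "Bfun u F"
proof (rule BfunI)
  have "eventually (\<lambda>x. norm (u x * E x) < norm a + 1) F"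
    using order_tendstoD(2)[OF tendsto_norm[OF lim]] by simp
  with E show "eventually (\<lambda>x. norm (u x) \<le> norm a + 1) F"
  proof eventually_elim
    case (elim x)
    have "norm (u x) * 1 \<le> norm (u x) * norm (E x)"
      using elim(1) by (intro mult_left_mono) auto
    with elim(2) show ?case
      by (simp add: norm_mult)
  qed
qed

lemma tendsto_mult_zero_if_tendsto_mult_large:
  fixes u v E :: "'a \<Rightarrow> 'b::real_normed_field"
  assumes u: "((\<lambda>x. u x * E x) \<longlongrightarrow> a) F"
    and v: "((\<lambda>x. v x * E x) \<longlongrightarrow> b) F"
    and "a * b = 0" and E: "eventually (\<lambda>x. 1 \<le> norm (E x)) F"
  shows "((\<lambda>x. u x * v x) \<longlongrightarrow> 0) F"
proof (rule Lim_null_comparison)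
  show "((\<lambda>x. norm ((u x * E x) * (v x * E x))) \<longlongrightarrow> 0) F"
    using tendsto_norm_zero tendsto_mult[OF u v] \<open>a * b = 0\<close> by fastforce
  show "eventually (\<lambda>x. norm (u x * v x) \<le> norm ((u x * E x) * (v x * E x))) F"
    using E
  proof eventually_elim
    case (elim x)
    have "norm (u x * v x) * 1 \<le> norm (u x * v x) * (norm (E x) * norm (E x))"
      using elim mult_mono[OF elim elim] by (intro mult_left_mono) auto
    then show ?case
      by (simp add: norm_mult mult_ac)
  qed
qed

lemma Re_mult_Im_eq_sin_double_Arg:
  "z \<noteq> 0 \<Longrightarrow> 2 * (Re z * Im z) = (cmod z)\<^sup>2 * sin (2 * Arg z)"
  unfolding sin_double by (simp add: cos_Arg sin_Arg power2_eq_square)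

lemma Im_square_nonneg_if_D_plus:
  assumes "l \<in> D_plus \<union> Sigma_contour"
  shows "0 \<le> Im (l\<^sup>2)"
proof -
  have "0 \<le> Re l * Im l"
  proof (cases "l \<in> D_plus")
    case True
    then have "l \<noteq> 0" and "Arg l \<in> {0<..<pi/2} \<or> Arg l \<in> {-pi<..<-pi/2}"
      unfolding D_plus_def by auto
    then have "0 \<le> sin (2 * Arg l)"
      using sin_gt_zero[of "2 * Arg l"] sin_gt_zero[of "2 * Arg l + 2 * pi"]
      by (auto simp: sin_add)
    moreover have "2 * (Re l * Im l) = (cmod l)\<^sup>2 * sin (2 * Arg l)"
      using \<open>l \<noteq> 0\<close> by (rule Re_mult_Im_eq_sin_double_Arg)
    ultimately have "0 \<le> 2 * (Re l * Im l)"
      by simp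
    then show ?thesis
      by linarith
  next
    case False
    then show ?thesis
      using assms by (auto simp: Sigma_contour_def)
  qed
  then show ?thesis
    by (simp add: power2_eq_square mult.commute)
qed

lemma Im_square_nonpos_if_D_minus:
  assumes "l \<in> D_minus \<union> Sigma_contour"
  shows "Im (l\<^sup>2) \<le> 0"
proof -
  have "Re l * Im l \<le> 0"
  proof (cases "l \<in> D_minus")
    case True
    then have "l \<noteq> 0" and "Arg l \<in> {pi/2<..<pi} \<or> Arg l \<in> {-pi/2<..<0}"
      unfolding D_minus_def by auto
    then have "sin (2 * Arg l) \<le> 0"
      using sin_gt_zero[of "2 * Arg l - pi"] sin_gt_zero[of "- (2 * Arg l)"]
      by (auto simp: sin_diff)
    moreover have "2 * (Re l * Im l) = (cmod l)\<^sup>2 * sin (2 * Arg l)"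
      using \<open>l \<noteq> 0\<close> by (rule Re_mult_Im_eq_sin_double_Arg)
    ultimately have "2 * (Re l * Im l) \<le> 0"
      by (simp add: mult_nonneg_nonpos)
    then show ?thesis
      by linarith
  next
    case False
    then show ?thesis
      using assms by (auto simp: Sigma_contour_def)
  qed
  then show ?thesis
    by (simp add: power2_eq_square mult.commute)
qed

lemma eventually_one_le_norm_exp_mult_of_real:
  "0 \<le> Re c \<Longrightarrow> eventually (\<lambda>x. 1 \<le> norm (exp (c * of_real x))) at_top"
  "Re c \<le> 0 \<Longrightarrow> eventually (\<lambda>x. 1 \<le> norm (exp (c * of_real x))) at_bot"
  unfolding eventually_at_top_linorder eventually_at_bot_linorder
  by (intro exI[of _ 0] allI impI; simp add: norm_exp_eq_Re zero_le_mult_iff)+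

lemma absolutely_integrable_if_inverse_square_bound:
  fixes f :: "real \<Rightarrow> 'a::euclidean_space"
  assumes "continuous_on UNIV f" and "\<And>x. norm (f x) \<le> C * inverse (1 + x\<^sup>2)"
  shows "f absolutely_integrable_on UNIV"
proof (rule measurable_bounded_by_integrable_imp_absolutely_integrable)
  show "f \<in> borel_measurable (lebesgue_on UNIV)"
    using assms(1) by (rule continuous_imp_measurable_on_sets_lebesgue) simp
  have "(\<lambda>x::real. inverse (1 + x\<^sup>2)) integrable_on UNIV"
    using integrable_on_lborel[OF integrable_inverse_1_plus_square[unfolded set_integrable_def]]
    by simp
  from integrable_on_cmult_left[OF this, of C]
  show "(\<lambda>x. C * inverse (1 + x\<^sup>2)) integrable_on UNIV"
    by simp
qed (use assms(2) in auto)

lemma absolutely_integrable_mult_bounded_continuous: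
  fixes f g :: "'a::euclidean_space \<Rightarrow> complex"
  assumes "f absolutely_integrable_on S" and "continuous_on S g" and "bounded (g ` S)"
    and "S \<in> sets lebesgue"
  shows "(\<lambda>x. f x * g x) absolutely_integrable_on S"
  using absolutely_integrable_bounded_measurable_product[OF bilinear_times
      continuous_imp_measurable_on_sets_lebesgue[OF assms(2,4)] assms(4,3,1)]
  by (simp add: mult.commute)

lemma integral_atMost_eq_if_has_vector_derivative:
  fixes f G :: "real \<Rightarrow> 'a::euclidean_space"
  assumes f: "f absolutely_integrable_on {..b}"
    and G: "\<And>y. y \<le> b \<Longrightarrow> (G has_vector_derivative f y) (at y)"
    and G_lim: "(G \<longlongrightarrow> 0) at_bot"
  shows "integral {..b} f = G b"
proof (rule tendsto_unique[OF trivial_limit_at_bot_linorder])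
  have "integral {a..b} f = G b - G a" if "a \<le> b" for a
  proof (rule integral_unique, rule fundamental_theorem_of_calculus[OF that])
    show "(G has_vector_derivative f y) (at y within {a..b})" if "y \<in> {a..b}" for y
      using G that by (auto intro: has_vector_derivative_at_within)
  qed
  then have "eventually (\<lambda>a. G b - G a = integral {a..b} f) at_bot"
    unfolding eventually_at_bot_linorder by (auto intro!: exI[of _ b])
  moreover have "((\<lambda>a. G b - G a) \<longlongrightarrow> G b - 0) at_bot"
    by (intro tendsto_intros G_lim)
  ultimately show "((\<lambda>a. integral {a..b} f) \<longlongrightarrow> G b) at_bot"
    by (simp add: tendsto_cong)
  have "set_lebesgue_integral lebesgue {a..b} f = integral {a..b} f" if "a \<le> b" for a
    using set_integrable_subset[OF f] by (intro set_lebesgue_integral_eq_integral) auto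
  then have "eventually (\<lambda>a. set_lebesgue_integral lebesgue {a..b} f = integral {a..b} f) at_bot"
    unfolding eventually_at_bot_linorder by (auto intro!: exI[of _ b])
  moreover have
    "((\<lambda>a. set_lebesgue_integral lebesgue {a..b} f) \<longlongrightarrow> integral {..b} f) at_bot"
    using tendsto_set_lebesgue_integral_at_bot[OF _ f] set_lebesgue_integral_eq_integral(2)[OF f]
    by simp
  ultimately show "((\<lambda>a. integral {a..b} f) \<longlongrightarrow> integral {..b} f) at_bot"
    by (simp add: tendsto_cong)
qed

lemma integral_atLeast_eq_if_has_vector_derivative:
  fixes f G :: "real \<Rightarrow> 'a::euclidean_space"
  assumes f: "f absolutely_integrable_on {a..}"
    and G: "\<And>y. a \<le> y \<Longrightarrow> (G has_vector_derivative f y) (at y)"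
    and G_lim: "(G \<longlongrightarrow> 0) at_top"
  shows "integral {a..} f = - G a"
proof (rule tendsto_unique[OF trivial_limit_at_top_linorder])
  have "integral {a..b} f = G b - G a" if "a \<le> b" for b
  proof (rule integral_unique, rule fundamental_theorem_of_calculus[OF that])
    show "(G has_vector_derivative f y) (at y within {a..b})" if "y \<in> {a..b}" for y
      using G that by (auto intro: has_vector_derivative_at_within)
  qed
  then have "eventually (\<lambda>b. G b - G a = integral {a..b} f) at_top"
    unfolding eventually_at_top_linorder by (auto intro!: exI[of _ a])
  moreover have "((\<lambda>b. G b - G a) \<longlongrightarrow> 0 - G a) at_top"
    by (intro tendsto_intros G_lim)
  ultimately show "((\<lambda>b. integral {a..b} f) \<longlongrightarrow> - G a) at_top"
    by (simp add: tendsto_cong)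
  have "set_lebesgue_integral lebesgue {a..b} f = integral {a..b} f" if "a \<le> b" for b
    using set_integrable_subset[OF f] by (intro set_lebesgue_integral_eq_integral) auto
  then have "eventually (\<lambda>b. set_lebesgue_integral lebesgue {a..b} f = integral {a..b} f) at_top"
    unfolding eventually_at_top_linorder by (auto intro!: exI[of _ a])
  moreover have
    "((\<lambda>b. set_lebesgue_integral lebesgue {a..b} f) \<longlongrightarrow> integral {a..} f) at_top"
    using tendsto_set_lebesgue_integral_at_top[OF _ f] set_lebesgue_integral_eq_integral(2)[OF f]
    by simp
  ultimately show "((\<lambda>b. integral {a..b} f) \<longlongrightarrow> integral {a..} f) at_top"
    by (simp add: tendsto_cong)
qed

locale kaup_newell_solution =
  fixes qh rh :: "real \<Rightarrow> complex" and l :: complex and u v :: "real \<Rightarrow> complex"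
  assumes qh_differentiable: "\<And>x. qh differentiable at x"
    and rh_differentiable: "\<And>x. rh differentiable at x"
    and u_has_derivative:
      "\<And>x. (u has_vector_derivative (- \<i> * l\<^sup>2 * u x + l * qh x * v x)) (at x)"
    and v_has_derivative:
      "\<And>x. (v has_vector_derivative (l * rh x * u x + \<i> * l\<^sup>2 * v x)) (at x)"
begin

definition u' :: "real \<Rightarrow> complex"
  where "u' x = - \<i> * l\<^sup>2 * u x + l * qh x * v x"

definition v' :: "real \<Rightarrow> complex"
  where "v' x = l * rh x * u x + \<i> * l\<^sup>2 * v x"

definition u'' :: "real \<Rightarrow> complex"
  where "u'' x = - \<i> * l\<^sup>2 * u' x + l * (dv qh x * v x + qh x * v' x)"

definition v'' :: "real \<Rightarrow> complex"
  where "v'' x = l * (dv rh x * u x + rh x * u' x) + \<i> * l\<^sup>2 * v' x"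

lemma qh_has_derivative: "(qh has_vector_derivative dv qh x) (at x)"
  using qh_differentiable vector_derivative_works unfolding dv_def by blast

lemma rh_has_derivative: "(rh has_vector_derivative dv rh x) (at x)"
  using rh_differentiable vector_derivative_works unfolding dv_def by blast

lemma u_has_derivative': "(u has_vector_derivative u' x) (at x)"
  unfolding u'_def by (rule u_has_derivative)

lemma v_has_derivative': "(v has_vector_derivative v' x) (at x)"
  unfolding v'_def by (rule v_has_derivative)

lemma u'_has_derivative: "(u' has_vector_derivative u'' x) (at x)"
  unfolding u'_def[abs_def]
  using has_vector_derivative_add[OF has_vector_derivative_mult_right[OF u_has_derivative]
      has_vector_derivative_mult[OF has_vector_derivative_mult_right[OF qh_has_derivative]
        v_has_derivative]]
  by (rule has_vector_derivative_eq_rhs) (simp add: u'_def v'_def u''_def algebra_simps)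

lemma v'_has_derivative: "(v' has_vector_derivative v'' x) (at x)"
  unfolding v'_def[abs_def]
  using has_vector_derivative_add[OF has_vector_derivative_mult[OF
        has_vector_derivative_mult_right[OF rh_has_derivative] u_has_derivative]
      has_vector_derivative_mult_right[OF v_has_derivative]]
  by (rule has_vector_derivative_eq_rhs) (simp add: u'_def v'_def v''_def algebra_simps)

lemma continuous_on_solution: "continuous_on UNIV u" "continuous_on UNIV v"
  by (meson continuous_at_imp_continuous_on has_vector_derivative_continuous
      u_has_derivative v_has_derivative)+

lemma square_u_has_second_derivative:
  "((\<lambda>x. 2 * u x * u' x) has_vector_derivative 2 * u' x * u' x + 2 * u x * u'' x) (at x)"
  using has_vector_derivative_mult[OF has_vector_derivative_mult_right[OF u_has_derivative']
      u'_has_derivative]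
  by (rule has_vector_derivative_eq_rhs) (simp add: algebra_simps)

lemma square_v_has_second_derivative:
  "((\<lambda>x. 2 * v x * v' x) has_vector_derivative 2 * v' x * v' x + 2 * v x * v'' x) (at x)"
  using has_vector_derivative_mult[OF has_vector_derivative_mult_right[OF v_has_derivative']
      v'_has_derivative]
  by (rule has_vector_derivative_eq_rhs) (simp add: algebra_simps)

lemma bounded_squares_derivatives:
  assumes "bounded (u ` S)" and "bounded (v ` S)" and "bounded (range qh)" and "bounded (range rh)"
  shows "bounded ((\<lambda>x. 2 * u x * u' x) ` S)" and "bounded ((\<lambda>x. 2 * v x * v' x) ` S)"
proof -
  have qh: "bounded (qh ` S)" and rh: "bounded (rh ` S)"
    using assms(3,4) by (auto intro: bounded_subset)
  have "bounded (u' ` S)"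
    unfolding u'_def
    by (intro bounded_plus_comp bounded_mult_comp[OF bounded_const_image] bounded_mult_comp
        assms(1,2) qh)
  then show "bounded ((\<lambda>x. 2 * u x * u' x) ` S)"
    by (intro bounded_mult_comp[OF bounded_mult_comp[OF bounded_const_image assms(1)]])
  have "bounded (v' ` S)"
    unfolding v'_def
    by (intro bounded_plus_comp bounded_mult_comp[OF bounded_const_image] bounded_mult_comp
        assms(1,2) rh)
  then show "bounded ((\<lambda>x. 2 * v x * v' x) ` S)"
    by (intro bounded_mult_comp[OF bounded_mult_comp[OF bounded_const_image assms(2)]])
qed

lemma product_has_derivative:
  "((\<lambda>x. u x * v x) has_vector_derivative l * (rh x * (u x)\<^sup>2 + qh x * (v x)\<^sup>2)) (at x)"
  using has_vector_derivative_mult[OF u_has_derivative v_has_derivative]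
  by (rule has_vector_derivative_eq_rhs) (simp add: algebra_simps power2_eq_square)

lemma L_integrand_has_antiderivative:
  "((\<lambda>x. -2 * \<i> * l * (u x * v x)) has_vector_derivative
     rh x * (2 * u x * u' x) + qh x * - (2 * v x * v' x)) (at x)"
  using has_vector_derivative_mult_right[OF product_has_derivative, of "-2 * \<i> * l"]
  by (rule has_vector_derivative_eq_rhs) (simp add: u'_def v'_def algebra_simps power2_eq_square)

lemma Lt_integrand_has_antiderivative:
  "((\<lambda>x. 2 * \<i> * l * (u x * v x)) has_vector_derivative
     qh x * (2 * v x * v' x) - rh x * (2 * u x * u' x)) (at x)"
  using has_vector_derivative_mult_right[OF product_has_derivative, of "2 * \<i> * l"]
  by (rule has_vector_derivative_eq_rhs) (simp add: u'_def v'_def algebra_simps power2_eq_square)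

lemma L_op_pointwise_identity:
  assumes "I1 + I2 = -2 * \<i> * l * (u x * v x)"
  shows "- (1/2) * (\<i> * (2 * u' x * u' x + 2 * u x * u'' x) + dv qh x * I1
            + qh x * rh x * (2 * u x * u' x) + dv qh x * I2 + (qh x)\<^sup>2 * - (2 * v x * v' x))
         = - (l\<^sup>2 * (2 * u x * u' x))"
    and "- (1/2) * (dv rh x * I1 + (rh x)\<^sup>2 * (2 * u x * u' x)
            - \<i> * - (2 * v' x * v' x + 2 * v x * v'' x) + dv rh x * I2
            + qh x * rh x * - (2 * v x * v' x))
         = - (l\<^sup>2 * - (2 * v x * v' x))"
  using assms unfolding u''_def v''_def u'_def v'_def
  by (simp_all add: algebra_simps power2_eq_square flip: eq_diff_eq)

lemma Lt_op_pointwise_identity: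
  assumes "I1 - I2 = -2 * \<i> * l * (u x * v x)"
  shows "- (1/2) * (- \<i> * (2 * v' x * v' x + 2 * v x * v'' x) - dv rh x * I1
            + qh x * rh x * (2 * v x * v' x) + dv rh x * I2 - (rh x)\<^sup>2 * (2 * u x * u' x))
         = - (l\<^sup>2 * (2 * v x * v' x))"
    and "- (1/2) * (dv qh x * I1 - (qh x)\<^sup>2 * (2 * v x * v' x)
            + \<i> * (2 * u' x * u' x + 2 * u x * u'' x) - dv qh x * I2
            + qh x * rh x * (2 * u x * u' x))
         = - (l\<^sup>2 * (2 * u x * u' x))"
  using assms unfolding u''_def v''_def u'_def v'_def
  by (simp_all add: algebra_simps power2_eq_square flip: eq_diff_eq)

lemma L_op_eigenfunction:
  assumes qh_int: "qh absolutely_integrable_on UNIV" and rh_int: "rh absolutely_integrable_on UNIV"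
    and qh_bounded: "bounded (range qh)" and rh_bounded: "bounded (range rh)"
    and u_bounded: "Bfun u at_bot" and v_bounded: "Bfun v at_bot"
    and uv_lim: "((\<lambda>x. u x * v x) \<longlongrightarrow> 0) at_bot"
  shows "let w1 = dv (\<lambda>x. (u x)\<^sup>2); w2 = (\<lambda>x. - dv (\<lambda>x. (v x)\<^sup>2) x) in
           L_defined qh rh w1 w2 \<and> (\<forall>x. L_op qh rh w1 w2 x = (- (l\<^sup>2 * w1 x), - (l\<^sup>2 * w2 x)))"
proof -
  define w1 where "w1 x = 2 * u x * u' x" for x
  define w2 where "w2 x = - (2 * v x * v' x)" for x
  have w: "dv (\<lambda>x. (u x)\<^sup>2) = w1" "(\<lambda>x. - dv (\<lambda>x. (v x)\<^sup>2) x) = w2"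
    using dv_square[OF u_has_derivative'] dv_square[OF v_has_derivative']
    by (auto simp: w1_def w2_def)
  have w_deriv: "(w1 has_vector_derivative 2 * u' x * u' x + 2 * u x * u'' x) (at x)"
    "(w2 has_vector_derivative - (2 * v' x * v' x + 2 * v x * v'' x)) (at x)" for x
    unfolding w1_def[abs_def] w2_def[abs_def]
    by (intro has_vector_derivative_minus square_u_has_second_derivative
        square_v_has_second_derivative)+
  have integrable: "(\<lambda>y. rh y * w1 y) absolutely_integrable_on {..x}"
    "(\<lambda>y. qh y * w2 y) absolutely_integrable_on {..x}" for x
  proof -
    have "bounded (u ` {..x})" "bounded (v ` {..x})"
      using continuous_on_solution u_bounded v_bounded
      by (auto intro: bounded_image_atMost_if_Bfun_at_bot)
    then have "bounded (w1 ` {..x})" "bounded (w2 ` {..x})"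
      using bounded_squares_derivatives[OF _ _ qh_bounded rh_bounded]
      by (auto simp: w1_def[abs_def] w2_def[abs_def])
    moreover have "continuous_on {..x} w1" "continuous_on {..x} w2"
      using w_deriv by (meson continuous_at_imp_continuous_on has_vector_derivative_continuous)+
    moreover have "rh absolutely_integrable_on {..x}" "qh absolutely_integrable_on {..x}"
      using set_integrable_subset[OF rh_int] set_integrable_subset[OF qh_int] by auto
    ultimately show "(\<lambda>y. rh y * w1 y) absolutely_integrable_on {..x}"
      "(\<lambda>y. qh y * w2 y) absolutely_integrable_on {..x}"
      by (auto intro: absolutely_integrable_mult_bounded_continuous)
  qed
  have integral_sum: "integral {..x} (\<lambda>y. rh y * w1 y) + integral {..x} (\<lambda>y. qh y * w2 y)
      = -2 * \<i> * l * (u x * v x)" for x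
  proof -
    have "integral {..x} (\<lambda>y. rh y * w1 y + qh y * w2 y) = -2 * \<i> * l * (u x * v x)"
    proof (rule integral_atMost_eq_if_has_vector_derivative)
      show "(\<lambda>y. rh y * w1 y + qh y * w2 y) absolutely_integrable_on {..x}"
        using integrable by (rule set_integral_add)
      show "((\<lambda>y. -2 * \<i> * l * (u y * v y)) has_vector_derivative
          rh y * w1 y + qh y * w2 y) (at y)" for y
        using L_integrand_has_antiderivative by (simp add: w1_def w2_def)
      show "((\<lambda>y. -2 * \<i> * l * (u y * v y)) \<longlongrightarrow> 0) at_bot"
        using uv_lim by (rule tendsto_mult_right_zero)
    qed
    then show ?thesis
      using integral_add[OF integrable[THEN set_lebesgue_integral_eq_integral(1)]] by simp
  qed
  show ?thesis
    unfolding Let_def w L_defined_def L_op_def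
    using integrable[THEN set_lebesgue_integral_eq_integral(1)]
      w_deriv[THEN dv_eq_if_has_vector_derivative] L_op_pointwise_identity[OF integral_sum]
    by (simp add: w1_def w2_def)
qed

lemma Lt_op_eigenfunction:
  assumes qh_int: "qh absolutely_integrable_on UNIV" and rh_int: "rh absolutely_integrable_on UNIV"
    and qh_bounded: "bounded (range qh)" and rh_bounded: "bounded (range rh)"
    and u_bounded: "Bfun u at_top" and v_bounded: "Bfun v at_top"
    and uv_lim: "((\<lambda>x. u x * v x) \<longlongrightarrow> 0) at_top"
  shows "let w1 = dv (\<lambda>x. (v x)\<^sup>2); w2 = dv (\<lambda>x. (u x)\<^sup>2) in
           Lt_defined qh rh w1 w2 \<and> (\<forall>x. Lt_op qh rh w1 w2 x = (- (l\<^sup>2 * w1 x), - (l\<^sup>2 * w2 x)))"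
proof -
  define w1 where "w1 x = 2 * v x * v' x" for x
  define w2 where "w2 x = 2 * u x * u' x" for x
  have w: "dv (\<lambda>x. (v x)\<^sup>2) = w1" "dv (\<lambda>x. (u x)\<^sup>2) = w2"
    using dv_square[OF v_has_derivative'] dv_square[OF u_has_derivative']
    by (auto simp: w1_def w2_def)
  have w_deriv: "(w1 has_vector_derivative 2 * v' x * v' x + 2 * v x * v'' x) (at x)"
    "(w2 has_vector_derivative 2 * u' x * u' x + 2 * u x * u'' x) (at x)" for x
    unfolding w1_def[abs_def] w2_def[abs_def]
    by (intro square_u_has_second_derivative square_v_has_second_derivative)+
  have integrable: "(\<lambda>y. qh y * w1 y) absolutely_integrable_on {x..}"
    "(\<lambda>y. rh y * w2 y) absolutely_integrable_on {x..}" for x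
  proof -
    have "bounded (u ` {x..})" "bounded (v ` {x..})"
      using continuous_on_solution u_bounded v_bounded
      by (auto intro: bounded_image_atLeast_if_Bfun_at_top)
    then have "bounded (w1 ` {x..})" "bounded (w2 ` {x..})"
      using bounded_squares_derivatives[OF _ _ qh_bounded rh_bounded]
      by (auto simp: w1_def[abs_def] w2_def[abs_def])
    moreover have "continuous_on {x..} w1" "continuous_on {x..} w2"
      using w_deriv by (meson continuous_at_imp_continuous_on has_vector_derivative_continuous)+
    moreover have "qh absolutely_integrable_on {x..}" "rh absolutely_integrable_on {x..}"
      using set_integrable_subset[OF rh_int] set_integrable_subset[OF qh_int] by auto
    ultimately show "(\<lambda>y. qh y * w1 y) absolutely_integrable_on {x..}"
      "(\<lambda>y. rh y * w2 y) absolutely_integrable_on {x..}"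
      by (auto intro: absolutely_integrable_mult_bounded_continuous)
  qed
  have integral_diff_eq: "integral {x..} (\<lambda>y. qh y * w1 y) - integral {x..} (\<lambda>y. rh y * w2 y)
      = -2 * \<i> * l * (u x * v x)" for x
  proof -
    have "integral {x..} (\<lambda>y. qh y * w1 y - rh y * w2 y) = - (2 * \<i> * l * (u x * v x))"
    proof (rule integral_atLeast_eq_if_has_vector_derivative)
      show "(\<lambda>y. qh y * w1 y - rh y * w2 y) absolutely_integrable_on {x..}"
        using integrable by (rule set_integral_diff)
      show "((\<lambda>y. 2 * \<i> * l * (u y * v y)) has_vector_derivative
          qh y * w1 y - rh y * w2 y) (at y)" for y
        using Lt_integrand_has_antiderivative by (simp add: w1_def w2_def)
      show "((\<lambda>y. 2 * \<i> * l * (u y * v y)) \<longlongrightarrow> 0) at_top"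
        using uv_lim by (rule tendsto_mult_right_zero)
    qed
    then show ?thesis
      using integral_diff[OF integrable[THEN set_lebesgue_integral_eq_integral(1)]] by simp
  qed
  show ?thesis
    unfolding Let_def w Lt_defined_def Lt_op_def
    using integrable[THEN set_lebesgue_integral_eq_integral(1)]
      w_deriv[THEN dv_eq_if_has_vector_derivative] Lt_op_pointwise_identity[OF integral_diff_eq]
    by (simp add: w1_def w2_def)
qed

end

lemma rapidly_decaying_derivative:
  assumes "rapidly_decaying q"
  shows "\<And>x. dv q differentiable at x" and "bounded (range (dv q))"
    and "\<exists>C. \<forall>x. norm (dv q x) \<le> C * inverse (1 + x\<^sup>2)"
proof -
  have smooth: "\<And>k x. ((dv ^^ k) q) differentiable (at x)"
    and decay: "\<And>k n. \<exists>C. \<forall>x::real. (1 + \<bar>x\<bar>) ^ n * norm ((dv ^^ k) q x) \<le> C"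
    using assms unfolding rapidly_decaying_def by auto
  show "dv q differentiable at x" for x
    using smooth[of 1 x] by simp
  show "bounded (range (dv q))"
    using decay[where k=1 and n=0] unfolding bounded_iff by auto
  obtain C where C: "\<And>x. (1 + \<bar>x\<bar>)\<^sup>2 * norm (dv q x) \<le> C"
    using decay[where k=1 and n=2] by auto
  have "norm (dv q x) \<le> C * inverse (1 + x\<^sup>2)" for x
  proof -
    have "(1 + x\<^sup>2) * norm (dv q x) \<le> (1 + \<bar>x\<bar>)\<^sup>2 * norm (dv q x)"
      by (intro mult_right_mono) (auto simp: power2_eq_square algebra_simps)
    with C[of x] have "(1 + x\<^sup>2) * norm (dv q x) \<le> C"
      by linarith
    then show ?thesis
      by (simp add: field_simps add_pos_nonneg)
  qed
  then show "\<exists>C. \<forall>x. norm (dv q x) \<le> C * inverse (1 + x\<^sup>2)"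
    by blast
qed

lemma rapidly_decaying_potentials:
  assumes "rapidly_decaying q"
  shows "dv q absolutely_integrable_on UNIV" and "(\<lambda>x. cnj (dv q x)) absolutely_integrable_on UNIV"
    and "bounded (range (dv q))" and "bounded (range (\<lambda>x. cnj (dv q x)))"
proof -
  obtain C where C: "\<And>x. norm (dv q x) \<le> C * inverse (1 + x\<^sup>2)"
    using rapidly_decaying_derivative(3)[OF assms] by blast
  have "continuous_on UNIV (dv q)"
    using rapidly_decaying_derivative(1)[OF assms]
    by (meson continuous_at_imp_continuous_on differentiable_imp_continuous_within)
  then show "dv q absolutely_integrable_on UNIV" "(\<lambda>x. cnj (dv q x)) absolutely_integrable_on UNIV"
    using C by (auto intro!: absolutely_integrable_if_inverse_square_bound continuous_intros)
  show "bounded (range (dv q))" "bounded (range (\<lambda>x. cnj (dv q x)))"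
    using rapidly_decaying_derivative(2)[OF assms] by (auto simp: bounded_iff)
qed

lemma kaup_newell_solution_if_lax_sol:
  assumes "rapidly_decaying q" and "lax_sol q l u v"
  shows "kaup_newell_solution (dv q) (\<lambda>x. cnj (dv q x)) l u v"
proof -
  have "(dv q has_vector_derivative dv (dv q) x) (at x)" for x
    using rapidly_decaying_derivative(1)[OF assms(1)] vector_derivative_works
    unfolding dv_def[of "dv q"] by blast
  then have "(\<lambda>x. cnj (dv q x)) differentiable at x" for x
    using has_vector_derivative_cnj differentiableI_vector by blast
  then show ?thesis
    using assms(2) rapidly_decaying_derivative(1)[OF assms(1)]
    unfolding kaup_newell_solution_def lax_sol_def by auto
qed

lemma jost_L_op_eigenfunction:
  assumes q: "rapidly_decaying q" and "lax_sol q l u v"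
    and u: "((\<lambda>x. u x * exp (c * of_real x)) \<longlongrightarrow> a) at_bot"
    and v: "((\<lambda>x. v x * exp (c * of_real x)) \<longlongrightarrow> b) at_bot"
    and "a * b = 0" and "Re c \<le> 0"
  shows "let w1 = dv (\<lambda>x. (u x)\<^sup>2); w2 = (\<lambda>x. - dv (\<lambda>x. (v x)\<^sup>2) x) in
           L_defined (dv q) (\<lambda>x. cnj (dv q x)) w1 w2 \<and>
           (\<forall>x. L_op (dv q) (\<lambda>x. cnj (dv q x)) w1 w2 x = (- (l\<^sup>2 * w1 x), - (l\<^sup>2 * w2 x)))"
proof -
  have E: "eventually (\<lambda>x. 1 \<le> norm (exp (c * of_real x))) at_bot"
    using eventually_one_le_norm_exp_mult_of_real(2)[OF \<open>Re c \<le> 0\<close>] .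
  show ?thesis
    by (rule kaup_newell_solution.L_op_eigenfunction[OF
          kaup_newell_solution_if_lax_sol[OF assms(1,2)] rapidly_decaying_potentials[OF q]
          Bfun_if_tendsto_mult_large[OF u E] Bfun_if_tendsto_mult_large[OF v E]
          tendsto_mult_zero_if_tendsto_mult_large[OF u v \<open>a * b = 0\<close> E]])
qed

lemma jost_Lt_op_eigenfunction:
  assumes q: "rapidly_decaying q" and "lax_sol q l u v"
    and u: "((\<lambda>x. u x * exp (c * of_real x)) \<longlongrightarrow> a) at_top"
    and v: "((\<lambda>x. v x * exp (c * of_real x)) \<longlongrightarrow> b) at_top"
    and "a * b = 0" and "0 \<le> Re c"
  shows "let w1 = dv (\<lambda>x. (v x)\<^sup>2); w2 = dv (\<lambda>x. (u x)\<^sup>2) in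
           Lt_defined (dv q) (\<lambda>x. cnj (dv q x)) w1 w2 \<and>
           (\<forall>x. Lt_op (dv q) (\<lambda>x. cnj (dv q x)) w1 w2 x = (- (l\<^sup>2 * w1 x), - (l\<^sup>2 * w2 x)))"
proof -
  have E: "eventually (\<lambda>x. 1 \<le> norm (exp (c * of_real x))) at_top"
    using eventually_one_le_norm_exp_mult_of_real(1)[OF \<open>0 \<le> Re c\<close>] .
  show ?thesis
    by (rule kaup_newell_solution.Lt_op_eigenfunction[OF
          kaup_newell_solution_if_lax_sol[OF assms(1,2)] rapidly_decaying_potentials[OF q]
          Bfun_if_tendsto_mult_large[OF u E] Bfun_if_tendsto_mult_large[OF v E]
          tendsto_mult_zero_if_tendsto_mult_large[OF u v \<open>a * b = 0\<close> E]])
qed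

theorem mainTheorem5:
  fixes q :: "real \<Rightarrow> complex"
  assumes "rapidly_decaying q"
  defines "qh \<equiv> dv q" and "rh \<equiv> (\<lambda>x. cnj (dv q x))"
  shows
   "(\<forall>l \<in> D_plus \<union> Sigma_contour. \<forall>v1 v2. jost_minus_1 q l v1 v2 \<longrightarrow>
      (let w1 = dv (\<lambda>x. (v1 x)^2); w2 = (\<lambda>x. - dv (\<lambda>x. (v2 x)^2) x) in
        L_defined qh rh w1 w2 \<and> (\<forall>x. L_op qh rh w1 w2 x = (- (l^2 * w1 x), - (l^2 * w2 x))))) \<and>
    (\<forall>l \<in> D_minus \<union> Sigma_contour. \<forall>v1 v2. jost_minus_2 q l v1 v2 \<longrightarrow>
      (let w1 = dv (\<lambda>x. (v1 x)^2); w2 = (\<lambda>x. - dv (\<lambda>x. (v2 x)^2) x) in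
        L_defined qh rh w1 w2 \<and> (\<forall>x. L_op qh rh w1 w2 x = (- (l^2 * w1 x), - (l^2 * w2 x))))) \<and>
    (\<forall>l \<in> D_minus \<union> Sigma_contour. \<forall>v1 v2. jost_plus_1 q l v1 v2 \<longrightarrow>
      (let w1 = dv (\<lambda>x. (v2 x)^2); w2 = dv (\<lambda>x. (v1 x)^2) in
        Lt_defined qh rh w1 w2 \<and> (\<forall>x. Lt_op qh rh w1 w2 x = (- (l^2 * w1 x), - (l^2 * w2 x))))) \<and>
    (\<forall>l \<in> D_plus \<union> Sigma_contour. \<forall>v1 v2. jost_plus_2 q l v1 v2 \<longrightarrow>
      (let w1 = dv (\<lambda>x. (v2 x)^2); w2 = dv (\<lambda>x. (v1 x)^2) in
        Lt_defined qh rh w1 w2 \<and> (\<forall>x. Lt_op qh rh w1 w2 x = (- (l^2 * w1 x), - (l^2 * w2 x)))))"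
  unfolding qh_def rh_def
  apply (intro conjI ballI allI impI)
  subgoal for l v1 v2
    by (rule jost_L_op_eigenfunction[OF assms(1), where c = "\<i> * l\<^sup>2" and a = 1 and b = 0])
      (use Im_square_nonneg_if_D_plus[of l] in \<open>auto simp: jost_minus_1_def\<close>)
  subgoal for l v1 v2
    by (rule jost_L_op_eigenfunction[OF assms(1), where c = "- \<i> * l\<^sup>2" and a = 0 and b = 1])
      (use Im_square_nonpos_if_D_minus[of l] in \<open>auto simp: jost_minus_2_def\<close>)
  subgoal for l v1 v2
    by (rule jost_Lt_op_eigenfunction[OF assms(1), where c = "\<i> * l\<^sup>2" and a = 1 and b = 0])
      (use Im_square_nonpos_if_D_minus[of l] in \<open>auto simp: jost_plus_1_def\<close>)
  subgoal for l v1 v2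
    by (rule jost_Lt_op_eigenfunction[OF assms(1), where c = "- \<i> * l\<^sup>2" and a = 0 and b = 1])
      (use Im_square_nonneg_if_D_plus[of l] in \<open>auto simp: jost_plus_2_def\<close>)
  done

end
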